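(* Let $\Omega\subset\mathbb{R}^2$ be open, $(\Omega_n)_{n\in\mathbb{N}}$ non-empty open sets with $\Omega_n\ne\mathbb{R}^2$, $\Omega_n\subset\Omega_{n+1}$, $\Omega=\bigcup_n\Omega_n$ and $d_{n,k}:=\operatorname{dist}(\Omega_n,\partial\Omega_k)>0$ for all $k>n$, and let $\nu_n\colon\Omega\to(0,\infty)$ be continuous with $\nu_n\le\nu_{n+1}$. Suppose that for every $n\in\mathbb{N}$ there is an integer $I_1(n)>n$ such that for every $\varepsilon>0$ there is a compact set $K\subset\overline{\Omega_n}$ with $\nu_n(x)\le\varepsilon\nu_{I_1(n)}(x)$ for all $x\in\Omega_n\setminus K$. Let $n\in\mathbb{N}$. Then $\pi_{I_1(n),n}(\mathcal{D}(\Omega_{I_1(n)}))$ is dense in $\pi_{I_1(n),n}(\mathcal{E}\nu_{I_1(n)}(\Omega_{I_1(n)}))$ with respect to the seminorms $(|\cdot|_{n,m})_{m\in\mathbb{N}_0}$.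
   Context: $\operatorname{dist}(M_0,M_1):=\inf_{x\in M_0,y\in M_1}|x-y|$ (Euclidean norm; $\infty$ if a set is empty). For $n\in\mathbb{N}$, $m\in\mathbb{N}_0$, $f\in\mathcal{C}^\infty(\Omega_n,\mathbb{C})$: $|f|_{n,m}:=\sup_{x\in\Omega_n,\beta\in\mathbb{N}_0^2,|\beta|\le m}|\partial^\beta f(x)|\nu_n(x)$, and $\mathcal{E}\nu_n(\Omega_n)$ is the space of such $f$ with $|f|_{n,m}<\infty$ for all $m$. $\mathcal{D}(U)$ is the space of smooth compactly supported $\mathbb{C}$-valued functions on $U$. $\pi_{k,n}(f):=f|_{\Omega_n}$ for $k\ge n$. *)

theory Defs
  imports "HOL-Analysis.Analysis"
begin

text \<open>Points of the plane are pairs of reals; the product norm on real \<times> real is the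
Euclidean norm. Functions are complex valued.\<close>

definition pd1 :: "(real \<times> real \<Rightarrow> complex) \<Rightarrow> real \<times> real \<Rightarrow> complex" where
  "pd1 f = (\<lambda>(a, b). vector_derivative (\<lambda>t. f (t, b)) (at a))"

definition pd2 :: "(real \<times> real \<Rightarrow> complex) \<Rightarrow> real \<times> real \<Rightarrow> complex" where
  "pd2 f = (\<lambda>(a, b). vector_derivative (\<lambda>t. f (a, t)) (at b))"

definition pd :: "nat \<Rightarrow> nat \<Rightarrow> (real \<times> real \<Rightarrow> complex) \<Rightarrow> real \<times> real \<Rightarrow> complex" where
  "pd i j f = (pd1 ^^ i) ((pd2 ^^ j) f)"

definition smooth_on_set :: "(real \<times> real) set \<Rightarrow> (real \<times> real \<Rightarrow> complex) \<Rightarrow> bool" where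
  "smooth_on_set U f \<longleftrightarrow> (\<forall>i j. pd i j f differentiable_on U)"

definition wsemi :: "(real \<times> real \<Rightarrow> real) \<Rightarrow> (real \<times> real) set \<Rightarrow> nat \<Rightarrow>
    (real \<times> real \<Rightarrow> complex) \<Rightarrow> ereal" where
  "wsemi w U m f = Sup {ereal (norm (pd i j f x) * w x) | x i j. x \<in> U \<and> i + j \<le> m}"

definition Enu :: "(real \<times> real \<Rightarrow> real) \<Rightarrow> (real \<times> real) set \<Rightarrow> (real \<times> real \<Rightarrow> complex) set" where
  "Enu w U = {f. smooth_on_set U f \<and> (\<forall>m. wsemi w U m f < \<infinity>)}"

definition Dtest :: "(real \<times> real) set \<Rightarrow> (real \<times> real \<Rightarrow> complex) set" where
  "Dtest U = {\<phi>. smooth_on_set U \<phi> \<and> compact (closure {x \<in> U. \<phi> x \<noteq> 0})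
                 \<and> closure {x \<in> U. \<phi> x \<noteq> 0} \<subseteq> U}"

end

theory Submission
  imports Defs "HOL-Computational_Algebra.Polynomial"
begin

text \<open>Let \<open>\<delta>\<close> be the distance from \<open>\<Omega>\<^sub>n\<close> to the frontier of \<open>\<Omega>\<^sub>I\<close>, \<open>I = I\<^sub>1(n)\<close>.
  Multiply \<open>f\<close> by a smooth cutoff \<open>\<chi>\<close> that equals \<open>1\<close> near the compact set \<open>K\<close> given by
  the hypothesis on \<open>I\<^sub>1\<close> and vanishes outside the \<open>\<delta>/2\<close>-neighbourhood of \<open>K\<close>; then
  \<open>\<chi> f\<close> is a test function on \<open>\<Omega>\<^sub>I\<close>. On \<open>K\<close> all derivatives of \<open>\<chi> f - f\<close> vanish, and
  off \<open>K\<close> we have \<open>\<nu>\<^sub>n \<le> \<eta> \<nu>\<^sub>I\<close>, so the Leibniz rule gives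
  \<open>|\<chi> f - f|\<^sub>n\<^sub>,\<^sub>m \<le> 2\<^sup>m R |f|\<^sub>I\<^sub>,\<^sub>m \<eta>\<close>, with \<open>R\<close> bounding the derivatives of \<open>\<chi> - 1\<close>
  of order at most \<open>m\<close>. Building \<open>\<chi>\<close> from products of translated one-dimensional bumps
  on a grid of mesh \<open>\<delta>/16\<close> makes \<open>R\<close> depend on \<open>\<delta>\<close> and \<open>m\<close> only, so \<open>\<eta>\<close> can be fixed
  before \<open>K\<close> is chosen.\<close>

section \<open>Smooth functions of one real variable\<close>

fun ntimes_differentiable :: "nat \<Rightarrow> (real \<Rightarrow> real) \<Rightarrow> bool" where
  "ntimes_differentiable 0 g = True"
| "ntimes_differentiable (Suc n) g \<longleftrightarrow>
     (\<forall>x. g differentiable at x) \<and> ntimes_differentiable n (deriv g)"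

lemma deriv_eqI: "(\<And>x. (g has_real_derivative g' x) (at x)) \<Longrightarrow> deriv g = g'"
  by (rule ext) (rule DERIV_imp_deriv)

lemmas DERIV_deriv = DERIV_deriv_iff_real_differentiable[THEN iffD2]

lemma ntimes_differentiable_SucD: "ntimes_differentiable (Suc n) g \<Longrightarrow> ntimes_differentiable n g"
  by (induction n arbitrary: g) auto

lemma ntimes_differentiable_const: "ntimes_differentiable n (\<lambda>_. c)"
proof (induction n arbitrary: c)
  case (Suc n)
  have "deriv (\<lambda>_. c) = (\<lambda>_. 0)" by (rule deriv_eqI) auto
  then show ?case using Suc by simp
qed simp

lemma ntimes_differentiable_add:
  "ntimes_differentiable n f \<Longrightarrow> ntimes_differentiable n g \<Longrightarrow>
    ntimes_differentiable n (\<lambda>x. f x + g x)"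
proof (induction n arbitrary: f g)
  case (Suc n)
  have D: "((\<lambda>x. f x + g x) has_real_derivative deriv f x + deriv g x) (at x)" for x
    using Suc.prems by (intro DERIV_add DERIV_deriv) auto
  then have "deriv (\<lambda>x. f x + g x) = (\<lambda>x. deriv f x + deriv g x)"
    by (rule deriv_eqI)
  with D Suc show ?case by (auto simp: real_differentiable_def)
qed simp

lemma ntimes_differentiable_mult:
  "ntimes_differentiable n f \<Longrightarrow> ntimes_differentiable n g \<Longrightarrow>
    ntimes_differentiable n (\<lambda>x. f x * g x)"
proof (induction n arbitrary: f g)
  case (Suc n)
  have D: "((\<lambda>x. f x * g x) has_real_derivative deriv f x * g x + f x * deriv g x) (at x)" for x
    using Suc.prems DERIV_mult[OF DERIV_deriv DERIV_deriv, of f x g] by (simp add: mult.commute)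
  then have "deriv (\<lambda>x. f x * g x) = (\<lambda>x. deriv f x * g x + f x * deriv g x)"
    by (rule deriv_eqI)
  moreover have "ntimes_differentiable n (\<lambda>x. deriv f x * g x + f x * deriv g x)"
    using Suc ntimes_differentiable_SucD by (intro ntimes_differentiable_add) auto
  ultimately show ?case using D by (auto simp: real_differentiable_def)
qed simp

lemma ntimes_differentiable_affine:
  "ntimes_differentiable n g \<Longrightarrow> ntimes_differentiable n (\<lambda>x. g (a * x + b))"
proof (induction n arbitrary: g)
  case (Suc n)
  have D: "((\<lambda>x. g (a * x + b)) has_real_derivative a * deriv g (a * x + b)) (at x)" for x
  proof -
    have "((\<lambda>x. a * x + b) has_real_derivative a) (at x)"
      by (auto intro!: derivative_eq_intros)
    with Suc.prems have "((\<lambda>x. g (a * x + b)) has_real_derivative deriv g (a * x + b) * a) (at x)"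
      by (intro DERIV_chain2[OF DERIV_deriv]) auto
    then show ?thesis by (simp add: mult.commute)
  qed
  then have "deriv (\<lambda>x. g (a * x + b)) = (\<lambda>x. a * deriv g (a * x + b))"
    by (rule deriv_eqI)
  moreover have "ntimes_differentiable n (\<lambda>x. a * deriv g (a * x + b))"
    using Suc by (intro ntimes_differentiable_mult ntimes_differentiable_const) auto
  ultimately show ?case using D by (auto simp: real_differentiable_def)
qed simp

lemma ntimes_differentiable_inverse:
  "ntimes_differentiable n g \<Longrightarrow> (\<And>x. g x \<noteq> 0) \<Longrightarrow> ntimes_differentiable n (\<lambda>x. inverse (g x))"
proof (induction n)
  case (Suc n)
  have D: "((\<lambda>x. inverse (g x)) has_real_derivative
      - (deriv g x * (inverse (g x) * inverse (g x)))) (at x)" for x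
  proof -
    have "(g has_real_derivative deriv g x) (at x)"
      using Suc.prems by (auto intro: DERIV_deriv)
    from DERIV_inverse_fun[OF this Suc.prems(2)] show ?thesis
      by (simp add: power2_eq_square)
  qed
  then have "deriv (\<lambda>x. inverse (g x)) = (\<lambda>x. (-1) * (deriv g x * (inverse (g x) * inverse (g x))))"
    by (intro deriv_eqI) simp
  moreover have "ntimes_differentiable n (\<lambda>x. (-1) * (deriv g x * (inverse (g x) * inverse (g x))))"
    using Suc ntimes_differentiable_SucD
    by (intro ntimes_differentiable_mult ntimes_differentiable_const) auto
  ultimately show ?case using D by (auto simp: real_differentiable_def)
qed simp

lemma ntimes_differentiable_higher_deriv:
  "ntimes_differentiable (n + k) g \<Longrightarrow> ntimes_differentiable k ((deriv ^^ n) g)"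
proof (induction n arbitrary: k)
  case (Suc n)
  from Suc.IH[of "Suc k"] Suc.prems show ?case by simp
qed simp

lemma higher_deriv_DERIV:
  "(\<And>n. ntimes_differentiable n g) \<Longrightarrow>
    ((deriv ^^ n) g has_real_derivative (deriv ^^ Suc n) g x) (at x)"
  using ntimes_differentiable_higher_deriv[of n 1 g] by (auto intro: DERIV_deriv)

definition flat_exp :: "real poly \<Rightarrow> real \<Rightarrow> real" where
  "flat_exp p t = (if t \<le> 0 then 0 else poly p (inverse t) * exp (- inverse t))"

lemma poly_div_exp_tendsto_0: "((\<lambda>z::real. poly q z / exp z) \<longlongrightarrow> 0) at_top"
proof -
  have "((\<lambda>z. \<Sum>i\<le>degree q. coeff q i * (z ^ i / exp z)) \<longlongrightarrow> (\<Sum>i\<le>degree q. coeff q i * 0)) at_top"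
    by (intro tendsto_sum tendsto_mult tendsto_const) (simp add: tendsto_power_div_exp_0)
  moreover have "(\<lambda>z. \<Sum>i\<le>degree q. coeff q i * (z ^ i / exp z)) = (\<lambda>z. poly q z / exp z)"
    by (rule ext) (simp add: poly_altdef sum_divide_distrib)
  ultimately show ?thesis by simp
qed

lemma flat_exp_DERIV:
  "(flat_exp p has_real_derivative flat_exp ([:0, 0, 1:] * (p - pderiv p)) t) (at t)"
proof (cases t "0::real" rule: linorder_cases)
  case less
  have "((\<lambda>_. 0) has_real_derivative 0) (at t)" by simp
  then have "(flat_exp p has_real_derivative 0) (at t)"
    by (rule has_field_derivative_transform_within_open[where S="{..<0}"])
       (use less in \<open>auto simp: flat_exp_def\<close>)
  with less show ?thesis by (simp add: flat_exp_def)
next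
  case equal
  have "((\<lambda>y. (flat_exp p y - flat_exp p 0) / (y - 0)) \<longlongrightarrow> 0) (at_left 0)"
  proof (rule tendsto_eventually)
    have "\<forall>\<^sub>F y in at_left 0. y < (0::real)" by (simp add: eventually_at_filter)
    then show "\<forall>\<^sub>F y in at_left 0. (flat_exp p y - flat_exp p 0) / (y - 0) = 0"
      by eventually_elim (simp add: flat_exp_def)
  qed
  moreover have "((\<lambda>y. (flat_exp p y - flat_exp p 0) / (y - 0)) \<longlongrightarrow> 0) (at_right 0)"
  proof -
    have "((\<lambda>y. poly (pCons 0 p) (inverse y) / exp (inverse y)) \<longlongrightarrow> 0) (at_right 0)"
      by (rule filterlim_compose[OF poly_div_exp_tendsto_0 filterlim_inverse_at_top_right])
    moreover have "\<forall>\<^sub>F y in at_right 0.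
        poly (pCons 0 p) (inverse y) / exp (inverse y) = (flat_exp p y - flat_exp p 0) / (y - 0)"
      using eventually_at_right_less[of "0::real"]
      by eventually_elim (simp add: flat_exp_def exp_minus field_simps)
    ultimately show ?thesis by (rule Lim_transform_eventually)
  qed
  ultimately have "((\<lambda>y. (flat_exp p y - flat_exp p 0) / (y - 0)) \<longlongrightarrow> 0) (at 0)"
    by (rule filterlim_split_at)
  then show ?thesis using equal by (simp add: has_field_derivative_iff flat_exp_def)
next
  case greater
  have d1: "((\<lambda>t. poly p (inverse t)) has_real_derivative
      poly (pderiv p) (inverse t) * (- inverse (t ^ 2))) (at t)"
    using DERIV_chain2[OF poly_DERIV DERIV_inverse[of t]] greater by (simp add: power2_eq_square)
  have d2: "((\<lambda>t. exp (- inverse t)) has_real_derivative exp (- inverse t) * inverse (t ^ 2)) (at t)"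
    using DERIV_chain2[OF DERIV_exp DERIV_minus[OF DERIV_inverse[of t]]] greater
    by (simp add: power2_eq_square)
  have "((\<lambda>t. poly p (inverse t) * exp (- inverse t)) has_real_derivative
      flat_exp ([:0, 0, 1:] * (p - pderiv p)) t) (at t)"
    using DERIV_mult[OF d1 d2] greater
    by (simp add: flat_exp_def algebra_simps power2_eq_square)
  then show ?thesis
    by (rule has_field_derivative_transform_within_open[where S="{0<..}"])
       (use greater in \<open>auto simp: flat_exp_def\<close>)
qed

lemma ntimes_differentiable_flat_exp: "ntimes_differentiable n (flat_exp p)"
proof (induction n arbitrary: p)
  case (Suc n)
  have "deriv (flat_exp p) = flat_exp ([:0, 0, 1:] * (p - pderiv p))"
    using flat_exp_DERIV by (rule deriv_eqI)
  then show ?case using Suc flat_exp_DERIV by (auto simp: real_differentiable_def)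
qed simp

lemma flat_exp_1_pos: "0 < t \<Longrightarrow> 0 < flat_exp 1 t"
  and flat_exp_eq_0: "t \<le> 0 \<Longrightarrow> flat_exp p t = 0"
  by (auto simp: flat_exp_def)

definition smooth_step :: "real \<Rightarrow> real" where
  "smooth_step t = flat_exp 1 t / (flat_exp 1 t + flat_exp 1 (1 - t))"

lemma ntimes_differentiable_smooth_step: "ntimes_differentiable n smooth_step"
proof -
  have nonzero: "flat_exp 1 t + flat_exp 1 ((-1) * t + 1) \<noteq> 0" for t
    using flat_exp_1_pos[of t] flat_exp_1_pos[of "1 - t"] flat_exp_eq_0[of t] flat_exp_eq_0[of "1 - t"]
    by (cases "0 < t"; cases "t < 1") auto
  have "ntimes_differentiable n (\<lambda>t. flat_exp 1 t * inverse (flat_exp 1 t + flat_exp 1 ((-1) * t + 1)))"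
    by (intro ntimes_differentiable_mult ntimes_differentiable_inverse ntimes_differentiable_add
        ntimes_differentiable_affine ntimes_differentiable_flat_exp nonzero)
  then show ?thesis by (simp add: smooth_step_def[abs_def] divide_inverse)
qed

lemma smooth_step_eq_0: "t \<le> 0 \<Longrightarrow> smooth_step t = 0"
  by (simp add: smooth_step_def flat_exp_eq_0)

lemma smooth_step_eq_1: "1 \<le> t \<Longrightarrow> smooth_step t = 1"
  using flat_exp_1_pos[of t] by (simp add: smooth_step_def flat_exp_eq_0)

definition bump :: "real \<Rightarrow> real" where
  "bump t = smooth_step (t + 1) - smooth_step t"

lemma bump_eq_0: "1 \<le> \<bar>t\<bar> \<Longrightarrow> bump t = 0"
  by (cases "1 \<le> t") (auto simp: bump_def smooth_step_eq_0 smooth_step_eq_1)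

lemma bump_translates_sum: "0 \<le> r \<Longrightarrow> r < 1 \<Longrightarrow> bump (r + 1) + bump r + bump (r - 1) = 1"
  by (simp add: bump_def smooth_step_eq_0 smooth_step_eq_1)

definition bump_deriv :: "nat \<Rightarrow> real \<Rightarrow> real" where
  "bump_deriv k = (deriv ^^ k) bump"

lemma bump_deriv_DERIV: "(bump_deriv k has_real_derivative bump_deriv (Suc k) x) (at x)"
proof -
  have "ntimes_differentiable n (\<lambda>t. smooth_step (1 * t + 1) + (-1) * smooth_step t)" for n
    by (intro ntimes_differentiable_add ntimes_differentiable_mult ntimes_differentiable_const
        ntimes_differentiable_affine ntimes_differentiable_smooth_step)
  then have "ntimes_differentiable n bump" for n
    by (simp add: bump_def[abs_def])
  then show ?thesis unfolding bump_deriv_def by (rule higher_deriv_DERIV)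
qed

lemma bump_deriv_eq_0: "1 < \<bar>t\<bar> \<Longrightarrow> bump_deriv k t = 0"
proof (induction k arbitrary: t)
  case 0
  then show ?case by (simp add: bump_deriv_def bump_eq_0)
next
  case (Suc k)
  have "open {t::real. 1 < \<bar>t\<bar>}"
    by (intro open_Collect_less continuous_intros)
  then have "(bump_deriv k has_real_derivative 0) (at t)"
    by (rule has_field_derivative_transform_within_open[OF DERIV_const]) (use Suc in auto)
  then show ?case using bump_deriv_DERIV DERIV_unique by blast
qed

lemma bump_deriv_bounded: "\<exists>M. \<forall>t. \<bar>bump_deriv k t\<bar> \<le> M"
proof -
  have "continuous_on {-1..1} (bump_deriv k)"
    using bump_deriv_DERIV by (intro continuous_at_imp_continuous_on) (blast intro: DERIV_isCont)
  then obtain M where M: "\<And>t. t \<in> {-1..1} \<Longrightarrow> \<bar>bump_deriv k t\<bar> \<le> M"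
    using compact_imp_bounded[OF compact_continuous_image] bounded_iff
    by (metis compact_Icc image_eqI real_norm_def)
  have "\<bar>bump_deriv k t\<bar> \<le> max M 0" for t
    using M[of t] bump_deriv_eq_0[of t] by (cases "1 < \<bar>t\<bar>") (auto simp: abs_if split: if_splits)
  then show ?thesis by blast
qed


section \<open>Partial derivatives in the plane\<close>

lemma pd_Suc: "pd (Suc i) j f = pd1 (pd i j f)"
  and pd_0_Suc: "pd 0 (Suc j) f = pd2 (pd 0 j f)"
  and pd_0_0: "pd 0 0 f = f"
  by (simp_all add: pd_def)

lemma pd1_eq: "pd1 F x = vector_derivative (\<lambda>t. F (t, snd x)) (at (fst x))"
  and pd2_eq: "pd2 F x = vector_derivative (\<lambda>t. F (fst x, t)) (at (snd x))"
  by (cases x; simp add: pd1_def pd2_def)+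

lemma pd1_eqI: "((\<lambda>t. F (t, snd x)) has_vector_derivative D) (at (fst x)) \<Longrightarrow> pd1 F x = D"
  and pd2_eqI: "((\<lambda>t. F (fst x, t)) has_vector_derivative D) (at (snd x)) \<Longrightarrow> pd2 F x = D"
  by (simp_all add: pd1_eq pd2_eq vector_derivative_at)

lemma has_vector_derivative_pd1:
  fixes F :: "real \<times> real \<Rightarrow> complex"
  assumes "F differentiable (at x)"
  shows "((\<lambda>t. F (t, snd x)) has_vector_derivative pd1 F x) (at (fst x))"
proof -
  obtain D where D: "(F has_derivative D) (at x)" using assms differentiable_def by blast
  have "((\<lambda>t. (t, snd x)) has_derivative (\<lambda>h. (h, 0))) (at (fst x))"
    by (rule has_derivative_Pair[OF has_derivative_ident has_derivative_const])
  from has_derivative_compose[OF this, of F D] D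
  have "((\<lambda>t. F (t, snd x)) has_derivative (\<lambda>h. D (h, 0))) (at (fst x))"
    by simp
  moreover have scale: "(\<lambda>h. D (h, 0)) = (\<lambda>h. h *\<^sub>R D (1, 0))"
  proof
    fix h
    have "D (h *\<^sub>R (1, 0)) = h *\<^sub>R D (1, 0)" by (rule linear_scale[OF has_derivative_linear[OF D]])
    then show "D (h, 0) = h *\<^sub>R D (1, 0)" by simp
  qed
  ultimately have "((\<lambda>t. F (t, snd x)) has_vector_derivative D (1, 0)) (at (fst x))"
    unfolding has_vector_derivative_def by (simp only: scale)
  then show ?thesis using pd1_eqI by metis
qed

lemma has_vector_derivative_pd2:
  fixes F :: "real \<times> real \<Rightarrow> complex"
  assumes "F differentiable (at x)"
  shows "((\<lambda>t. F (fst x, t)) has_vector_derivative pd2 F x) (at (snd x))"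
proof -
  obtain D where D: "(F has_derivative D) (at x)" using assms differentiable_def by blast
  have "((\<lambda>t. (fst x, t)) has_derivative (\<lambda>h. (0, h))) (at (snd x))"
    by (rule has_derivative_Pair[OF has_derivative_const has_derivative_ident])
  from has_derivative_compose[OF this, of F D] D
  have "((\<lambda>t. F (fst x, t)) has_derivative (\<lambda>h. D (0, h))) (at (snd x))"
    by simp
  moreover have scale: "(\<lambda>h. D (0, h)) = (\<lambda>h. h *\<^sub>R D (0, 1))"
  proof
    fix h
    have "D (h *\<^sub>R (0, 1)) = h *\<^sub>R D (0, 1)" by (rule linear_scale[OF has_derivative_linear[OF D]])
    then show "D (0, h) = h *\<^sub>R D (0, 1)" by simp
  qed
  ultimately have "((\<lambda>t. F (fst x, t)) has_vector_derivative D (0, 1)) (at (snd x))"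
    unfolding has_vector_derivative_def by (simp only: scale)
  then show ?thesis using pd2_eqI by metis
qed

lemma pd1_cong_open:
  assumes "open W" "x \<in> W" "\<And>y. y \<in> W \<Longrightarrow> F y = G y"
  shows "pd1 F x = pd1 G x"
proof -
  have "open ((\<lambda>t. (t, snd x)) -` W)"
    by (intro continuous_open_vimage assms(1) continuous_intros)
  then have "\<forall>\<^sub>F t in nhds (fst x). F (t, snd x) = G (t, snd x)"
    unfolding eventually_nhds using assms(2,3) by (intro exI[of _ "(\<lambda>t. (t, snd x)) -` W"]) simp
  then show ?thesis
    unfolding pd1_eq by (intro vector_derivative_cong_eq[where A = UNIV]) simp_all
qed

lemma pd2_cong_open:
  assumes "open W" "x \<in> W" "\<And>y. y \<in> W \<Longrightarrow> F y = G y"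
  shows "pd2 F x = pd2 G x"
proof -
  have "open ((\<lambda>t. (fst x, t)) -` W)"
    by (intro continuous_open_vimage assms(1) continuous_intros)
  then have "\<forall>\<^sub>F t in nhds (snd x). F (fst x, t) = G (fst x, t)"
    unfolding eventually_nhds using assms(2,3) by (intro exI[of _ "(\<lambda>t. (fst x, t)) -` W"]) simp
  then show ?thesis
    unfolding pd2_eq by (intro vector_derivative_cong_eq[where A = UNIV]) simp_all
qed

lemma pd_cong_open:
  assumes "open W" "x \<in> W" "\<And>y. y \<in> W \<Longrightarrow> F y = G y"
  shows "pd i j F x = pd i j G x"
proof -
  have "\<forall>y\<in>W. (pd2 ^^ j) F y = (pd2 ^^ j) G y"
  proof (induction j)
    case (Suc j)
    show ?case
      unfolding funpow.simps comp_def by (intro ballI pd2_cong_open[OF assms(1)]) (use Suc in auto)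
  qed (simp add: assms(3))
  then have "\<forall>y\<in>W. (pd1 ^^ i) ((pd2 ^^ j) F) y = (pd1 ^^ i) ((pd2 ^^ j) G) y"
  proof (induction i)
    case (Suc i)
    show ?case
      unfolding funpow.simps comp_def by (intro ballI pd1_cong_open[OF assms(1)]) (use Suc in auto)
  qed simp
  then show ?thesis using assms(2) by (simp add: pd_def)
qed

lemma pd_zero: "pd i j (\<lambda>_. 0) = (\<lambda>_. 0)"
proof -
  have zero1: "pd1 (\<lambda>_. 0) = (\<lambda>_. 0)" and zero2: "pd2 (\<lambda>_. 0) = (\<lambda>_. 0)"
    by (simp_all add: fun_eq_iff pd1_eq pd2_eq)
  have "(pd2 ^^ j) (\<lambda>_. 0) = (\<lambda>_. 0)" by (induction j) (simp_all add: zero2)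
  moreover have "(pd1 ^^ i) (\<lambda>_. 0) = (\<lambda>_. 0)" by (induction i) (simp_all add: zero1)
  ultimately show ?thesis by (simp add: pd_def)
qed

text \<open>No differentiability is needed: both sides are the same Hilbert choice, as
  \<open>F\<close> and \<open>F - c\<close> have the same vector derivatives.\<close>

lemma pd_diff_const:
  "pd i j (\<lambda>x. F x - c) = (if i = 0 \<and> j = 0 then (\<lambda>x. F x - c) else pd i j F)"
proof -
  have pd1: "pd1 (\<lambda>x. G x - c) = pd1 G" and pd2: "pd2 (\<lambda>x. G x - c) = pd2 G" for G
    by (simp_all add: pd1_def pd2_def vector_derivative_def has_vector_derivative_diff_const)
  have "(pd2 ^^ Suc j) (\<lambda>x. F x - c) = (pd2 ^^ Suc j) F" for j
    by (induction j) (simp_all add: pd2)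
  moreover have "(pd1 ^^ Suc i) (\<lambda>x. G x - c) = (pd1 ^^ Suc i) G" for i G
    by (induction i) (simp_all add: pd1)
  ultimately show ?thesis
    by (cases i; cases j) (simp_all add: pd_def)
qed

section \<open>A Leibniz bound for products\<close>

text \<open>Since \<open>pd\<close> applies all \<open>pd2\<close> before any
  \<open>pd1\<close>, the flag \<open>only2\<close> records that no \<open>pd1\<close> has occurred yet; only then does \<open>pd2\<close>
  act on a factor by raising its second index.\<close>

inductive leibniz_sum :: "(real \<times> real \<Rightarrow> complex) \<Rightarrow> (real \<times> real \<Rightarrow> complex) \<Rightarrow> bool \<Rightarrow> nat \<Rightarrow>
    nat \<Rightarrow> (real \<times> real \<Rightarrow> complex) \<Rightarrow> bool" for a f only2 m where
  product: "p + q \<le> m \<Longrightarrow> p' + q' \<le> m \<Longrightarrow> (only2 \<longrightarrow> p = 0 \<and> p' = 0) \<Longrightarrow>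
    leibniz_sum a f only2 m 1 (\<lambda>x. pd p q a x * pd p' q' f x)"
| add: "leibniz_sum a f only2 m N1 g1 \<Longrightarrow> leibniz_sum a f only2 m N2 g2 \<Longrightarrow>
    leibniz_sum a f only2 m (N1 + N2) (\<lambda>x. g1 x + g2 x)"

lemma leibniz_sum_norm_le:
  assumes "leibniz_sum a f only2 m N g"
    and "\<And>p q. p + q \<le> m \<Longrightarrow> norm (pd p q a x) \<le> R"
    and "\<And>p q. p + q \<le> m \<Longrightarrow> norm (pd p q f x) \<le> P"
  shows "norm (g x) \<le> N * R * P"
  using assms(1)
proof induction
  case (product p q p' q')
  have "0 \<le> R" using order_trans[OF norm_ge_zero assms(2)[of 0 0]] by simp
  then have "norm (pd p q a x) * norm (pd p' q' f x) \<le> R * P"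
    using product by (intro mult_mono assms(2,3)) auto
  then show ?case by (simp add: norm_mult)
next
  case (add N1 g1 N2 g2)
  have "norm (g1 x + g2 x) \<le> norm (g1 x) + norm (g2 x)" by (rule norm_triangle_ineq)
  also have "\<dots> \<le> N1 * R * P + N2 * R * P" using add.IH by (rule add_mono)
  finally show ?case by (simp add: algebra_simps)
qed

lemma leibniz_sum_only2D: "leibniz_sum a f True m N g \<Longrightarrow> leibniz_sum a f False m N g"
proof (induction rule: leibniz_sum.induct)
  case (product p q p' q')
  then show ?case by (intro leibniz_sum.product) auto
qed (rule leibniz_sum.add)

context
  fixes U a f
  assumes U: "open U" and smooth_a: "smooth_on_set U a" and smooth_f: "smooth_on_set U f"
begin

lemma pd_differentiable_at: "x \<in> U \<Longrightarrow> pd p q a differentiable (at x) \<and> pd p q f differentiable (at x)"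
  using smooth_a smooth_f U unfolding smooth_on_set_def
  by (meson differentiable_on_eq_differentiable_at)

lemma leibniz_sum_differentiable_on: "leibniz_sum a f only2 m N g \<Longrightarrow> g differentiable_on U"
proof (induction rule: leibniz_sum.induct)
  case (product p q p' q')
  show ?case
    using smooth_a smooth_f unfolding smooth_on_set_def by (intro differentiable_on_mult) auto
qed (rule differentiable_on_add)

lemma leibniz_sum_pd1:
  "leibniz_sum a f only2 m N g \<Longrightarrow> \<exists>g'. leibniz_sum a f False (Suc m) (2 * N) g' \<and>
     (\<forall>x\<in>U. ((\<lambda>t. g (t, snd x)) has_vector_derivative g' x) (at (fst x)))"
proof (induction rule: leibniz_sum.induct)
  case (product p q p' q')
  define g' where "g' x = pd (Suc p) q a x * pd p' q' f x + pd p q a x * pd (Suc p') q' f x" for x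
  have "leibniz_sum a f False (Suc m) (1 + 1) g'"
    unfolding g'_def using product by (intro leibniz_sum.intros) auto
  moreover have "((\<lambda>t. pd p q a (t, snd x) * pd p' q' f (t, snd x)) has_vector_derivative g' x)
      (at (fst x))" if "x \<in> U" for x
  proof -
    have "((\<lambda>t. pd p q a (t, snd x)) has_vector_derivative pd (Suc p) q a x) (at (fst x))"
      and "((\<lambda>t. pd p' q' f (t, snd x)) has_vector_derivative pd (Suc p') q' f x) (at (fst x))"
      using has_vector_derivative_pd1 pd_differentiable_at[OF that] by (simp_all add: pd_Suc)
    from has_vector_derivative_mult[OF this] show ?thesis
      by (simp add: g'_def algebra_simps)
  qed
  ultimately show ?case by (metis mult_2)
next
  case (add N1 g1 N2 g2)
  then obtain g1' g2' where
    "leibniz_sum a f False (Suc m) (2 * N1) g1'"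
    "\<forall>x\<in>U. ((\<lambda>t. g1 (t, snd x)) has_vector_derivative g1' x) (at (fst x))"
    "leibniz_sum a f False (Suc m) (2 * N2) g2'"
    "\<forall>x\<in>U. ((\<lambda>t. g2 (t, snd x)) has_vector_derivative g2' x) (at (fst x))"
    by blast
  then show ?case
    by (intro exI[of _ "\<lambda>x. g1' x + g2' x"] conjI ballI has_vector_derivative_add)
       (auto simp: add_mult_distrib2 intro: leibniz_sum.add)
qed

lemma leibniz_sum_pd2:
  "leibniz_sum a f True m N g \<Longrightarrow> \<exists>g'. leibniz_sum a f True (Suc m) (2 * N) g' \<and>
     (\<forall>x\<in>U. ((\<lambda>t. g (fst x, t)) has_vector_derivative g' x) (at (snd x)))"
proof (induction rule: leibniz_sum.induct)
  case (product p q p' q')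
  then have "p = 0" "p' = 0" by auto
  define g' where "g' x = pd 0 (Suc q) a x * pd 0 q' f x + pd 0 q a x * pd 0 (Suc q') f x" for x
  have "leibniz_sum a f True (Suc m) (1 + 1) g'"
    unfolding g'_def using product by (intro leibniz_sum.intros) auto
  moreover have "((\<lambda>t. pd 0 q a (fst x, t) * pd 0 q' f (fst x, t)) has_vector_derivative g' x)
      (at (snd x))" if "x \<in> U" for x
  proof -
    have "((\<lambda>t. pd 0 q a (fst x, t)) has_vector_derivative pd 0 (Suc q) a x) (at (snd x))"
      and "((\<lambda>t. pd 0 q' f (fst x, t)) has_vector_derivative pd 0 (Suc q') f x) (at (snd x))"
      using has_vector_derivative_pd2 pd_differentiable_at[OF that] by (simp_all add: pd_0_Suc)
    from has_vector_derivative_mult[OF this] show ?thesis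
      by (simp add: g'_def algebra_simps)
  qed
  ultimately show ?case using \<open>p = 0\<close> \<open>p' = 0\<close> by (metis mult_2)
next
  case (add N1 g1 N2 g2)
  then obtain g1' g2' where
    "leibniz_sum a f True (Suc m) (2 * N1) g1'"
    "\<forall>x\<in>U. ((\<lambda>t. g1 (fst x, t)) has_vector_derivative g1' x) (at (snd x))"
    "leibniz_sum a f True (Suc m) (2 * N2) g2'"
    "\<forall>x\<in>U. ((\<lambda>t. g2 (fst x, t)) has_vector_derivative g2' x) (at (snd x))"
    by blast
  then show ?case
    by (intro exI[of _ "\<lambda>x. g1' x + g2' x"] conjI ballI has_vector_derivative_add)
       (auto simp: add_mult_distrib2 intro: leibniz_sum.add)
qed

lemma pd_0_mult_leibniz_sum:
  "\<exists>g. leibniz_sum a f True j (2 ^ j) g \<and> (\<forall>x\<in>U. pd 0 j (\<lambda>x. a x * f x) x = g x)"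
proof (induction j)
  case 0
  have "leibniz_sum a f True 0 1 (\<lambda>x. pd 0 0 a x * pd 0 0 f x)"
    by (rule leibniz_sum.product) auto
  then show ?case by (auto simp: pd_0_0)
next
  case (Suc j)
  then obtain g where g: "leibniz_sum a f True j (2 ^ j) g"
    "\<forall>x\<in>U. pd 0 j (\<lambda>x. a x * f x) x = g x" by blast
  obtain g' where g': "leibniz_sum a f True (Suc j) (2 * 2 ^ j) g'"
    "\<forall>x\<in>U. ((\<lambda>t. g (fst x, t)) has_vector_derivative g' x) (at (snd x))"
    using leibniz_sum_pd2[OF g(1)] by blast
  have "pd 0 (Suc j) (\<lambda>x. a x * f x) x = g' x" if x: "x \<in> U" for x
  proof -
    have "pd 0 (Suc j) (\<lambda>x. a x * f x) x = pd2 g x"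
      unfolding pd_0_Suc by (rule pd2_cong_open[OF U x]) (use g(2) in auto)
    also have "\<dots> = g' x" using g'(2) x by (intro pd2_eqI) auto
    finally show ?thesis .
  qed
  then show ?case using g' by auto
qed

lemma pd_mult_leibniz_sum:
  "\<exists>g. leibniz_sum a f False (i + j) (2 ^ (i + j)) g \<and> (\<forall>x\<in>U. pd i j (\<lambda>x. a x * f x) x = g x)"
proof (induction i)
  case 0
  obtain g where "leibniz_sum a f True j (2 ^ j) g" "\<forall>x\<in>U. pd 0 j (\<lambda>x. a x * f x) x = g x"
    using pd_0_mult_leibniz_sum by blast
  then show ?case by (intro exI[of _ g] conjI) (simp_all add: leibniz_sum_only2D)
next
  case (Suc i)
  then obtain g where g: "leibniz_sum a f False (i + j) (2 ^ (i + j)) g"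
    "\<forall>x\<in>U. pd i j (\<lambda>x. a x * f x) x = g x" by blast
  obtain g' where g': "leibniz_sum a f False (Suc (i + j)) (2 * 2 ^ (i + j)) g'"
    "\<forall>x\<in>U. ((\<lambda>t. g (t, snd x)) has_vector_derivative g' x) (at (fst x))"
    using leibniz_sum_pd1[OF g(1)] by blast
  have "pd (Suc i) j (\<lambda>x. a x * f x) x = g' x" if x: "x \<in> U" for x
  proof -
    have "pd (Suc i) j (\<lambda>x. a x * f x) x = pd1 g x"
      unfolding pd_Suc by (rule pd1_cong_open[OF U x]) (use g(2) in auto)
    also have "\<dots> = g' x" using g'(2) x by (intro pd1_eqI) auto
    finally show ?thesis .
  qed
  then show ?case using g' by auto
qed

lemma smooth_on_set_mult: "smooth_on_set U (\<lambda>x. a x * f x)"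
  unfolding smooth_on_set_def
proof (intro allI)
  fix i j
  obtain g where g: "leibniz_sum a f False (i + j) (2 ^ (i + j)) g"
    "\<forall>x\<in>U. pd i j (\<lambda>x. a x * f x) x = g x"
    using pd_mult_leibniz_sum by blast
  have "g differentiable_on U" using g(1) by (rule leibniz_sum_differentiable_on)
  then show "pd i j (\<lambda>x. a x * f x) differentiable_on U"
    unfolding differentiable_on_def
  proof (intro ballI)
    fix x assume x: "x \<in> U" and "\<forall>x\<in>U. g differentiable at x within U"
    then obtain D where D: "(g has_derivative D) (at x within U)"
      by (auto simp: differentiable_def)
    have "(pd i j (\<lambda>x. a x * f x) has_derivative D) (at x within U)"
      by (rule has_derivative_transform[OF x _ D]) (use g(2) in auto)
    then show "pd i j (\<lambda>x. a x * f x) differentiable at x within U"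
      by (rule differentiableI)
  qed
qed

lemma norm_pd_mult_le:
  assumes "x \<in> U" "i + j \<le> m"
    and "\<And>p q. p + q \<le> m \<Longrightarrow> norm (pd p q a x) \<le> R"
    and "\<And>p q. p + q \<le> m \<Longrightarrow> norm (pd p q f x) \<le> P"
  shows "norm (pd i j (\<lambda>x. a x * f x) x) \<le> 2 ^ m * R * P"
proof -
  obtain g where g: "leibniz_sum a f False (i + j) (2 ^ (i + j)) g"
    "\<forall>x\<in>U. pd i j (\<lambda>x. a x * f x) x = g x"
    using pd_mult_leibniz_sum by blast
  have "0 \<le> R" "0 \<le> P"
    using order_trans[OF norm_ge_zero assms(3)[of 0 0]] order_trans[OF norm_ge_zero assms(4)[of 0 0]]
    by simp_all
  have "norm (g x) \<le> real (2 ^ (i + j)) * R * P"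
    by (rule leibniz_sum_norm_le[OF g(1)]) (use assms(2-4) in auto)
  also have "\<dots> \<le> 2 ^ m * R * P"
  proof -
    have "real (2 ^ (i + j)) \<le> 2 ^ m" using assms(2) by (simp add: power_increasing)
    then show ?thesis using \<open>0 \<le> R\<close> \<open>0 \<le> P\<close> by (intro mult_right_mono) auto
  qed
  finally show ?thesis using g(2) assms(1) by simp
qed

end


section \<open>A smooth cutoff built from a grid of bumps\<close>

lemma pd_of_real_family:
  fixes F :: "nat \<Rightarrow> nat \<Rightarrow> real \<times> real \<Rightarrow> real"
  assumes d1: "\<And>a b x. ((\<lambda>t. F a b (t, snd x)) has_real_derivative F (Suc a) b x) (at (fst x))"
    and d2: "\<And>a b x. ((\<lambda>t. F a b (fst x, t)) has_real_derivative F a (Suc b) x) (at (snd x))"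
  shows "pd a b (\<lambda>x. complex_of_real (F 0 0 x)) = (\<lambda>x. complex_of_real (F a b x))"
proof -
  have "(pd2 ^^ b) (\<lambda>x. complex_of_real (F 0 0 x)) = (\<lambda>x. complex_of_real (F 0 b x))"
  proof (induction b)
    case (Suc b)
    have "pd2 (\<lambda>x. complex_of_real (F 0 b x)) = (\<lambda>x. complex_of_real (F 0 (Suc b) x))"
      by (rule ext, rule pd2_eqI, rule has_vector_derivative_of_real, rule d2)
    then show ?case using Suc by simp
  qed simp
  moreover have "(pd1 ^^ a) (\<lambda>x. complex_of_real (F 0 b x)) = (\<lambda>x. complex_of_real (F a b x))"
  proof (induction a)
    case (Suc a)
    have "pd1 (\<lambda>x. complex_of_real (F a b x)) = (\<lambda>x. complex_of_real (F (Suc a) b x))"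
      by (rule ext, rule pd1_eqI, rule has_vector_derivative_of_real, rule d1)
    then show ?case using Suc by simp
  qed simp
  ultimately show ?thesis by (simp add: pd_def)
qed

definition bump_grid :: "real \<Rightarrow> (int \<times> int) set \<Rightarrow> nat \<Rightarrow> nat \<Rightarrow> real \<times> real \<Rightarrow> real" where
  "bump_grid c S a b x = (\<Sum>p\<in>S. c ^ (a + b) *
     (bump_deriv a (c * fst x - of_int (fst p)) * bump_deriv b (c * snd x - of_int (snd p))))"

lemma bump_deriv_affine_DERIV:
  "((\<lambda>t. bump_deriv a (c * t - r)) has_real_derivative bump_deriv (Suc a) (c * t - r) * c) (at t)"
  by (rule DERIV_chain2[OF bump_deriv_DERIV]) (auto intro!: derivative_eq_intros)

lemma bump_grid_DERIV1:
  "((\<lambda>t. bump_grid c S a b (t, snd x)) has_real_derivative bump_grid c S (Suc a) b x) (at (fst x))"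
proof -
  have "((\<lambda>t. \<Sum>p\<in>S. c ^ (a + b) *
      (bump_deriv a (c * t - of_int (fst p)) * bump_deriv b (c * snd x - of_int (snd p))))
    has_real_derivative (\<Sum>p\<in>S. c ^ (a + b) *
      (bump_deriv (Suc a) (c * fst x - of_int (fst p)) * c * bump_deriv b (c * snd x - of_int (snd p)))))
    (at (fst x))"
    by (intro DERIV_sum DERIV_cmult DERIV_cmult_right bump_deriv_affine_DERIV)
  moreover have "(\<Sum>p\<in>S. c ^ (a + b) *
      (bump_deriv (Suc a) (c * fst x - of_int (fst p)) * c * bump_deriv b (c * snd x - of_int (snd p))))
    = bump_grid c S (Suc a) b x"
    unfolding bump_grid_def by (intro sum.cong refl) (simp add: algebra_simps)
  ultimately show ?thesis unfolding bump_grid_def by simp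
qed

lemma bump_grid_DERIV2:
  "((\<lambda>t. bump_grid c S a b (fst x, t)) has_real_derivative bump_grid c S a (Suc b) x) (at (snd x))"
proof -
  have "((\<lambda>t. \<Sum>p\<in>S. c ^ (a + b) *
      (bump_deriv a (c * fst x - of_int (fst p)) * bump_deriv b (c * t - of_int (snd p))))
    has_real_derivative (\<Sum>p\<in>S. c ^ (a + b) *
      (bump_deriv a (c * fst x - of_int (fst p)) * (bump_deriv (Suc b) (c * snd x - of_int (snd p)) * c))))
    (at (snd x))"
    by (intro DERIV_sum DERIV_cmult bump_deriv_affine_DERIV)
  moreover have "(\<Sum>p\<in>S. c ^ (a + b) *
      (bump_deriv a (c * fst x - of_int (fst p)) * (bump_deriv (Suc b) (c * snd x - of_int (snd p)) * c)))
    = bump_grid c S a (Suc b) x"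
    unfolding bump_grid_def by (intro sum.cong refl) (simp add: algebra_simps)
  ultimately show ?thesis unfolding bump_grid_def by simp
qed

lemma bump_grid_differentiable: "bump_grid c S a b differentiable (at x)"
proof (cases "finite S")
  case True
  have affine1: "(\<lambda>x. c * fst x - of_int i) differentiable (at x)"
    and affine2: "(\<lambda>x. c * snd x - of_int i) differentiable (at x)" for x :: "real \<times> real" and i :: int
    by (intro differentiable_diff differentiable_mult differentiable_const
        bounded_linear_imp_differentiable bounded_linear_fst bounded_linear_snd)+
  note differentiable_bump_deriv =
    bump_deriv_DERIV[THEN real_differentiable_def[THEN iffD2, OF exI], of k t for k t]
  have "(\<lambda>x. c ^ (a + b) * (bump_deriv a (c * fst x - of_int (fst p)) *
      bump_deriv b (c * snd x - of_int (snd p)))) differentiable (at x)" for p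
    by (intro differentiable_mult differentiable_const
        differentiable_compose[OF differentiable_bump_deriv affine1]
        differentiable_compose[OF differentiable_bump_deriv affine2])
  then show ?thesis
    unfolding bump_grid_def[abs_def] using True by (intro differentiable_sum) auto
qed (simp add: bump_grid_def[abs_def])

lemma pd_bump_grid:
  "pd a b (\<lambda>x. complex_of_real (bump_grid c S 0 0 x)) = (\<lambda>x. complex_of_real (bump_grid c S a b x))"
  by (rule pd_of_real_family[of "bump_grid c S", OF bump_grid_DERIV1 bump_grid_DERIV2])

lemma smooth_on_set_bump_grid: "smooth_on_set U (\<lambda>x. complex_of_real (bump_grid c S 0 0 x))"
  unfolding smooth_on_set_def pd_bump_grid
  by (intro allI differentiable_at_imp_differentiable_on ballI
      differentiable_compose[OF _ bump_grid_differentiable] bounded_linear_imp_differentiable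
      bounded_linear_of_real)

definition near_ints :: "real \<Rightarrow> int set" where
  "near_ints t = {\<lfloor>t\<rfloor> - 1, \<lfloor>t\<rfloor>, \<lfloor>t\<rfloor> + 1}"

lemma finite_near_ints: "finite (near_ints t)"
  by (simp add: near_ints_def)

lemma card_near_ints_le: "card (near_ints t) \<le> 3"
  using card_length[of "[\<lfloor>t\<rfloor> - 1, \<lfloor>t\<rfloor>, \<lfloor>t\<rfloor> + 1]"] by (simp add: near_ints_def)

lemma abs_diff_lt_2_if_near_ints: "i \<in> near_ints t \<Longrightarrow> \<bar>t - of_int i\<bar> < 2"
proof -
  assume "i \<in> near_ints t"
  then have "real_of_int \<lfloor>t\<rfloor> - 1 \<le> of_int i \<and> real_of_int i \<le> of_int \<lfloor>t\<rfloor> + 1"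
    by (auto simp: near_ints_def)
  then show ?thesis by linarith
qed

lemma one_lt_abs_diff_if_not_near_ints: "i \<notin> near_ints t \<Longrightarrow> 1 < \<bar>t - of_int i\<bar>"
proof -
  assume "i \<notin> near_ints t"
  then have "i \<le> \<lfloor>t\<rfloor> - 2 \<or> \<lfloor>t\<rfloor> + 2 \<le> i" by (auto simp: near_ints_def)
  then have "real_of_int i \<le> of_int \<lfloor>t\<rfloor> - 2 \<or> of_int \<lfloor>t\<rfloor> + 2 \<le> real_of_int i" by linarith
  then show ?thesis by linarith
qed

lemma sum_bump_near_ints: "(\<Sum>i\<in>near_ints t. bump (t - of_int i)) = 1"
proof -
  define r where "r = t - of_int \<lfloor>t\<rfloor>"
  have "0 \<le> r" "r < 1" unfolding r_def by linarith+
  moreover have "(\<Sum>i\<in>near_ints t. bump (t - of_int i)) = bump (r + 1) + bump r + bump (r - 1)"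
    unfolding near_ints_def by (simp add: r_def algebra_simps)
  ultimately show ?thesis using bump_translates_sum by simp
qed

definition near_cells :: "real \<Rightarrow> real \<times> real \<Rightarrow> (int \<times> int) set" where
  "near_cells c x = near_ints (c * fst x) \<times> near_ints (c * snd x)"

lemma bump_grid_eq_sum_near_cells:
  assumes "finite S"
  shows "bump_grid c S a b x = (\<Sum>p\<in>S \<inter> near_cells c x. c ^ (a + b) *
     (bump_deriv a (c * fst x - of_int (fst p)) * bump_deriv b (c * snd x - of_int (snd p))))"
proof -
  have "bump_deriv a (c * fst x - of_int (fst p)) * bump_deriv b (c * snd x - of_int (snd p)) = 0"
    if "p \<notin> near_cells c x" for p
    using that one_lt_abs_diff_if_not_near_ints bump_deriv_eq_0
    by (cases p) (auto simp: near_cells_def)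
  then show ?thesis
    unfolding bump_grid_def using assms by (intro sum.mono_neutral_right) auto
qed

lemma abs_bump_grid_le:
  assumes "finite S" "c > 0" "\<And>t. \<bar>bump_deriv a t\<bar> \<le> Ma" "\<And>t. \<bar>bump_deriv b t\<bar> \<le> Mb"
  shows "\<bar>bump_grid c S a b x\<bar> \<le> 9 * (c ^ (a + b) * (Ma * Mb))"
proof -
  have "0 \<le> Ma" "0 \<le> Mb" using assms(3,4)[of 0] by linarith+
  have "card (S \<inter> near_cells c x) \<le> card (near_cells c x)"
    by (rule card_mono) (auto simp: near_cells_def finite_near_ints)
  also have "\<dots> \<le> 3 * 3"
    unfolding near_cells_def card_cartesian_product by (intro mult_mono card_near_ints_le) auto
  finally have card: "real (card (S \<inter> near_cells c x)) \<le> 9" by simp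
  have "\<bar>bump_grid c S a b x\<bar> \<le> (\<Sum>p\<in>S \<inter> near_cells c x. \<bar>c ^ (a + b) *
      (bump_deriv a (c * fst x - of_int (fst p)) * bump_deriv b (c * snd x - of_int (snd p)))\<bar>)"
    unfolding bump_grid_eq_sum_near_cells[OF assms(1)] by (rule sum_abs)
  also have "\<dots> \<le> real (card (S \<inter> near_cells c x)) * (c ^ (a + b) * (Ma * Mb))"
  proof (rule sum_bounded_above)
    fix p
    have "\<bar>bump_deriv a (c * fst x - of_int (fst p))\<bar> * \<bar>bump_deriv b (c * snd x - of_int (snd p))\<bar>
        \<le> Ma * Mb"
      using assms(3,4) \<open>0 \<le> Ma\<close> by (intro mult_mono) auto
    then show "\<bar>c ^ (a + b) * (bump_deriv a (c * fst x - of_int (fst p)) *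
        bump_deriv b (c * snd x - of_int (snd p)))\<bar> \<le> c ^ (a + b) * (Ma * Mb)"
      using assms(2) by (simp add: abs_mult mult_left_mono)
  qed
  also have "\<dots> \<le> 9 * (c ^ (a + b) * (Ma * Mb))"
    using card assms(2) \<open>0 \<le> Ma\<close> \<open>0 \<le> Mb\<close> by (intro mult_right_mono) auto
  finally show ?thesis .
qed

lemma bump_grid_eq_1:
  assumes "finite S" "near_cells c x \<subseteq> S"
  shows "bump_grid c S 0 0 x = 1"
proof -
  have "bump_grid c S 0 0 x =
      (\<Sum>p\<in>near_cells c x. bump (c * fst x - of_int (fst p)) * bump (c * snd x - of_int (snd p)))"
    unfolding bump_grid_eq_sum_near_cells[OF assms(1)] using assms(2)
    by (intro sum.cong) (auto simp: bump_deriv_def)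
  also have "\<dots> = (\<Sum>i\<in>near_ints (c * fst x). bump (c * fst x - of_int i)) *
      (\<Sum>j\<in>near_ints (c * snd x). bump (c * snd x - of_int j))"
    unfolding near_cells_def sum_product sum.cartesian_product by (intro sum.cong) auto
  finally show ?thesis by (simp add: sum_bump_near_ints)
qed

lemma bump_grid_nonzero:
  assumes "bump_grid c S 0 0 x \<noteq> 0"
  shows "\<exists>p\<in>S. \<bar>c * fst x - of_int (fst p)\<bar> < 1 \<and> \<bar>c * snd x - of_int (snd p)\<bar> < 1"
proof -
  obtain p where "p \<in> S" "bump (c * fst x - of_int (fst p)) * bump (c * snd x - of_int (snd p)) \<noteq> 0"
    using assms unfolding bump_grid_def bump_deriv_def
    by (metis (no_types, lifting) funpow_0 mult_1 power_0 sum.neutral add_0)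
  then show ?thesis using bump_eq_0 by (auto simp: not_less[symmetric])
qed

text \<open>Since the integer translates of \<open>bump\<close> sum to \<open>1\<close>, the cutoff equals \<open>1\<close> wherever
  all nine neighbouring cells are selected, and its derivatives are bounded independently
  of \<open>K\<close>.\<close>

definition grid_cells :: "real \<Rightarrow> (real \<times> real) set \<Rightarrow> (int \<times> int) set" where
  "grid_cells c K =
     {p. \<exists>k\<in>K. \<bar>c * fst k - of_int (fst p)\<bar> \<le> 3 \<and> \<bar>c * snd k - of_int (snd p)\<bar> \<le> 3}"

definition grid_cutoff :: "real \<Rightarrow> (real \<times> real) set \<Rightarrow> real \<times> real \<Rightarrow> complex" where
  "grid_cutoff c K x = complex_of_real (bump_grid c (grid_cells c K) 0 0 x)"

lemma finite_grid_cells: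
  assumes "bounded K"
  shows "finite (grid_cells c K)"
proof -
  obtain B where B: "\<And>k. k \<in> K \<Longrightarrow> norm k \<le> B" using assms bounded_iff by blast
  define N where "N = \<lceil>\<bar>c\<bar> * B + 3\<rceil>"
  have "\<bar>fst p\<bar> \<le> N \<and> \<bar>snd p\<bar> \<le> N" if cell: "p \<in> grid_cells c K" for p
  proof -
    obtain k where k: "k \<in> K" "\<bar>c * fst k - of_int (fst p)\<bar> \<le> 3" "\<bar>c * snd k - of_int (snd p)\<bar> \<le> 3"
      using cell unfolding grid_cells_def by blast
    have "\<bar>fst k\<bar> \<le> norm k" "\<bar>snd k\<bar> \<le> norm k"
      using norm_fst_le[of "fst k" "snd k"] norm_snd_le[of "snd k" "fst k"] by simp_all
    then have "\<bar>fst k\<bar> \<le> B" "\<bar>snd k\<bar> \<le> B" using B[OF k(1)] by linarith+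
    then have "\<bar>c * fst k\<bar> \<le> \<bar>c\<bar> * B" "\<bar>c * snd k\<bar> \<le> \<bar>c\<bar> * B"
      by (auto simp: abs_mult intro: mult_left_mono)
    then have "\<bar>of_int (fst p)\<bar> \<le> \<bar>c\<bar> * B + 3" "\<bar>of_int (snd p)\<bar> \<le> \<bar>c\<bar> * B + 3"
      using k(2,3) by linarith+
    then show ?thesis unfolding N_def by linarith
  qed
  then have "grid_cells c K \<subseteq> {-N..N} \<times> {-N..N}" by (force simp: abs_le_iff)
  then show ?thesis by (rule finite_subset) simp
qed

lemma smooth_on_set_grid_cutoff: "smooth_on_set U (grid_cutoff c K)"
  unfolding grid_cutoff_def[abs_def] by (rule smooth_on_set_bump_grid)

lemma grid_cutoff_eq_1:
  assumes "c > 0" "bounded K" "k \<in> K" "dist k y < 1 / c"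
  shows "grid_cutoff c K y = 1"
proof -
  have "\<bar>fst y - fst k\<bar> < 1 / c" "\<bar>snd y - snd k\<bar> < 1 / c"
    using dist_fst_le[of k y] dist_snd_le[of k y] assms(4) by (simp_all add: dist_real_def abs_minus_commute)
  then have "c * \<bar>fst y - fst k\<bar> < 1" "c * \<bar>snd y - snd k\<bar> < 1"
    using assms(1) by (simp_all add: field_simps)
  then have close: "\<bar>c * fst y - c * fst k\<bar> < 1" "\<bar>c * snd y - c * snd k\<bar> < 1"
    using assms(1) by (simp_all add: abs_mult flip: right_diff_distrib)
  have "near_cells c y \<subseteq> grid_cells c K"
  proof
    fix p assume "p \<in> near_cells c y"
    then have "\<bar>c * fst y - of_int (fst p)\<bar> < 2" "\<bar>c * snd y - of_int (snd p)\<bar> < 2"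
      by (auto simp: near_cells_def abs_diff_lt_2_if_near_ints)
    then show "p \<in> grid_cells c K"
      using close assms(3) unfolding grid_cells_def by (intro CollectI bexI[of _ k]) linarith+
  qed
  then show ?thesis
    by (simp add: grid_cutoff_def bump_grid_eq_1 finite_grid_cells[OF assms(2)])
qed

lemma grid_cutoff_nonzero:
  assumes "c > 0" "grid_cutoff c K x \<noteq> 0"
  shows "\<exists>k\<in>K. dist k x < 8 / c"
proof -
  obtain p where "p \<in> grid_cells c K"
    and x: "\<bar>c * fst x - of_int (fst p)\<bar> < 1" "\<bar>c * snd x - of_int (snd p)\<bar> < 1"
    using bump_grid_nonzero[of c "grid_cells c K" x] assms(2) unfolding grid_cutoff_def by auto
  then obtain k where "k \<in> K"
    and k: "\<bar>c * fst k - of_int (fst p)\<bar> \<le> 3" "\<bar>c * snd k - of_int (snd p)\<bar> \<le> 3"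
    unfolding grid_cells_def by blast
  have "\<bar>c * fst k - c * fst x\<bar> < 4" "\<bar>c * snd k - c * snd x\<bar> < 4"
    using x k by linarith+
  then have "c * \<bar>fst k - fst x\<bar> < 4" "c * \<bar>snd k - snd x\<bar> < 4"
    using assms(1) by (simp_all add: abs_mult flip: right_diff_distrib)
  then have "\<bar>fst k - fst x\<bar> < 4 / c" "\<bar>snd k - snd x\<bar> < 4 / c"
    using assms(1) by (simp_all add: field_simps)
  moreover have "dist k x \<le> \<bar>fst k - fst x\<bar> + \<bar>snd k - snd x\<bar>"
    using norm_Pair_le[of "fst k - fst x" "snd k - snd x"] by (cases k, cases x) (simp add: dist_norm)
  ultimately have "dist k x < 8 / c" by simp
  with \<open>k \<in> K\<close> show ?thesis by blast
qed

lemma compact_Union_cball: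
  fixes K :: "'a::euclidean_space set"
  assumes "compact K"
  shows "compact (\<Union>k\<in>K. cball k r)"
proof -
  have "(\<Union>k\<in>K. cball k r) = (\<Union>k\<in>K. \<Union>v\<in>cball 0 r. {k + v})"
  proof (intro equalityI subsetI)
    fix y assume "y \<in> (\<Union>k\<in>K. cball k r)"
    then obtain k where "k \<in> K" "dist k y \<le> r" by auto
    then show "y \<in> (\<Union>k\<in>K. \<Union>v\<in>cball 0 r. {k + v})"
      by (intro UN_I[of k] UN_I[of "y - k"]) (auto simp: dist_norm norm_minus_commute)
  qed (force simp: dist_norm)
  then show ?thesis using compact_sums'[OF assms compact_cball] by simp
qed

lemma grid_cutoff_support:
  assumes "c > 0" "compact K"
  shows "closure {x. grid_cutoff c K x \<noteq> 0} \<subseteq> (\<Union>k\<in>K. cball k (8 / c))"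
    and "compact (closure {x. grid_cutoff c K x \<noteq> 0})"
proof -
  have support: "{x. grid_cutoff c K x \<noteq> 0} \<subseteq> (\<Union>k\<in>K. cball k (8 / c))"
    using grid_cutoff_nonzero[OF assms(1)] by (force simp: less_imp_le)
  have compact: "compact (\<Union>k\<in>K. cball k (8 / c))"
    using assms(2) by (rule compact_Union_cball)
  then show "closure {x. grid_cutoff c K x \<noteq> 0} \<subseteq> (\<Union>k\<in>K. cball k (8 / c))"
    using support by (intro closure_minimal compact_imp_closed)
  show "compact (closure {x. grid_cutoff c K x \<noteq> 0})"
    using bounded_subset[OF compact_imp_bounded[OF compact] support] by simp
qed

lemma grid_cutoff_minus_1_pd_bounded:
  assumes "c > 0"
  shows "\<exists>R\<ge>0. \<forall>K x i j. bounded K \<longrightarrow> i + j \<le> m \<longrightarrow>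
           norm (pd i j (\<lambda>y. grid_cutoff c K y - 1) x) \<le> R"
proof -
  obtain M where M: "\<And>a t. \<bar>bump_deriv a t\<bar> \<le> M a"
    using bump_deriv_bounded by metis
  have "0 \<le> M a" for a using M[of a 0] by linarith
  define R where "R = 1 + (\<Sum>a\<le>m. \<Sum>b\<le>m. 9 * (c ^ (a + b) * (M a * M b)))"
  have terms_nonneg: "0 \<le> 9 * (c ^ (a + b) * (M a * M b))" for a b
    using assms \<open>\<And>a. 0 \<le> M a\<close> by simp
  have "norm (pd i j (\<lambda>y. grid_cutoff c K y - 1) x) \<le> R"
    if "bounded K" "i + j \<le> m" for K x i j
  proof -
    have "\<bar>bump_grid c (grid_cells c K) i j x\<bar> \<le> 9 * (c ^ (i + j) * (M i * M j))"
      by (rule abs_bump_grid_le[OF finite_grid_cells[OF that(1)] assms M M])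
    also have "\<dots> \<le> (\<Sum>b\<le>m. 9 * (c ^ (i + b) * (M i * M b)))"
      using that(2) by (intro member_le_sum terms_nonneg) auto
    also have "\<dots> \<le> (\<Sum>a\<le>m. \<Sum>b\<le>m. 9 * (c ^ (a + b) * (M a * M b)))"
      using that(2) by (intro member_le_sum[of i "{..m}" "\<lambda>a. \<Sum>b\<le>m. _ a b"] sum_nonneg terms_nonneg) auto
    finally show ?thesis
      using pd_bump_grid[of i j c "grid_cells c K"] norm_triangle_ineq4[of "grid_cutoff c K x" 1]
      by (auto simp: pd_diff_const grid_cutoff_def[abs_def] R_def)
  qed
  moreover have "0 \<le> R" unfolding R_def by (intro add_nonneg_nonneg sum_nonneg terms_nonneg) simp
  ultimately show ?thesis by blast
qed

lemma pd_grid_cutoff_minus_1_eq_0: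
  assumes "c > 0" "bounded K" "x \<in> K"
  shows "pd i j (\<lambda>y. grid_cutoff c K y - 1) x = 0"
proof -
  have "pd i j (\<lambda>y. grid_cutoff c K y - 1) x = pd i j (\<lambda>_. 0) x"
    using grid_cutoff_eq_1[OF assms] assms(1) by (intro pd_cong_open[of "ball x (1 / c)"]) auto
  then show ?thesis by (simp add: pd_zero)
qed


section \<open>Approximation in the weighted seminorms\<close>

lemma cball_subset_if_frontier_dist:
  fixes A B :: "'a::euclidean_space set"
  assumes "A \<subseteq> B" "\<forall>x\<in>A. \<forall>z\<in>frontier B. \<delta> \<le> dist x z" "k \<in> closure A" "r < \<delta>"
  shows "cball k r \<subseteq> B"
proof
  fix y assume "y \<in> cball k r"
  show "y \<in> B"
  proof (rule ccontr)
    assume "y \<notin> B"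
    have "0 < \<delta> - dist k y" using \<open>y \<in> cball k r\<close> assms(4) by simp
    then obtain x where x: "x \<in> A" "dist x k < \<delta> - dist k y"
      using assms(3) closure_approachable by metis
    have "closed_segment x y \<inter> frontier B \<noteq> {}"
      using x(1) \<open>y \<notin> B\<close> assms(1) by (intro connected_Int_frontier) auto
    then obtain z where z: "z \<in> closed_segment x y" "z \<in> frontier B" by blast
    have "dist x z \<le> dist x y" using dist_in_closed_segment[OF z(1)] by (simp add: dist_commute)
    also have "\<dots> < \<delta>" using x(2) dist_triangle[of x y k] by linarith
    finally show False using assms(2) x(1) z(2) by fastforce
  qed
qed

lemma smooth_on_set_diff_const:
  assumes "smooth_on_set U F"
  shows "smooth_on_set U (\<lambda>x. F x - c)"
proof -
  have "F differentiable_on U" using assms pd_0_0 unfolding smooth_on_set_def by metis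
  then show ?thesis
    using assms unfolding smooth_on_set_def pd_diff_const by (auto intro: differentiable_on_diff)
qed

lemma mult_in_Dtest:
  assumes "open U" "smooth_on_set U g" "smooth_on_set U f"
    and "compact (closure {x. g x \<noteq> 0})" "closure {x. g x \<noteq> 0} \<subseteq> U"
  shows "(\<lambda>x. g x * f x) \<in> Dtest U"
proof -
  have support: "closure {x \<in> U. g x * f x \<noteq> 0} \<subseteq> closure {x. g x \<noteq> 0}"
    by (intro closure_mono) auto
  have "compact (closure {x. g x \<noteq> 0} \<inter> closure {x \<in> U. g x * f x \<noteq> 0})"
    by (rule compact_Int_closed[OF assms(4) closed_closure])
  then have "compact (closure {x \<in> U. g x * f x \<noteq> 0})"
    by (simp only: Int_absorb1[OF support])
  then show ?thesis
    using support assms smooth_on_set_mult by (auto simp: Dtest_def)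
qed

lemma wsemi_le:
  assumes "\<And>x i j. x \<in> U \<Longrightarrow> i + j \<le> m \<Longrightarrow> norm (pd i j F x) * w x \<le> C"
  shows "wsemi w U m F \<le> ereal C"
  unfolding wsemi_def by (rule Sup_least) (use assms in auto)

lemma wsemi_finite_imp_bound:
  assumes "wsemi w U m F < \<infinity>"
  shows "\<exists>W\<ge>0. \<forall>x\<in>U. \<forall>i j. i + j \<le> m \<longrightarrow> norm (pd i j F x) * w x \<le> W"
proof (intro exI[of _ "max 0 (real_of_ereal (wsemi w U m F))"] conjI ballI allI impI)
  fix x i j assume "x \<in> U" "i + j \<le> m"
  then have "ereal (norm (pd i j F x) * w x) \<le> wsemi w U m F"
    unfolding wsemi_def by (intro Sup_upper) blast
  with assms show "norm (pd i j F x) * w x \<le> max 0 (real_of_ereal (wsemi w U m F))"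
    by (cases "wsemi w U m F") auto
qed simp

lemma wsemi_mult_le:
  assumes "open U" "A \<subseteq> U" "smooth_on_set U a" "smooth_on_set U f" "0 \<le> \<eta>"
    and w_pos: "\<And>x. x \<in> A \<Longrightarrow> 0 < w x" and v_nonneg: "\<And>x. x \<in> A \<Longrightarrow> 0 \<le> v x"
    and a_bound: "\<And>x p q. x \<in> A \<Longrightarrow> p + q \<le> m \<Longrightarrow> norm (pd p q a x) \<le> R"
    and f_bound: "\<And>x p q. x \<in> A \<Longrightarrow> p + q \<le> m \<Longrightarrow> norm (pd p q f x) * w x \<le> W"
    and small: "\<And>x. x \<in> A \<Longrightarrow> v x \<le> \<eta> * w x \<or> (\<forall>p q. p + q \<le> m \<longrightarrow> pd p q a x = 0)"
  shows "wsemi v A m (\<lambda>x. a x * f x) \<le> ereal (2 ^ m * R * W * \<eta>)"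
proof (rule wsemi_le)
  fix x i j assume x: "x \<in> A" and ij: "i + j \<le> m"
  have "x \<in> U" using x assms(2) by blast
  have "0 < w x" "0 \<le> v x" using w_pos v_nonneg x by auto
  have "0 \<le> R" using order_trans[OF norm_ge_zero a_bound[OF x, of 0 0]] by simp
  have "0 \<le> W"
    using order_trans[OF mult_nonneg_nonneg[OF norm_ge_zero] f_bound[OF x, of 0 0]] \<open>0 < w x\<close> by simp
  have f_le: "norm (pd p q f x) \<le> W / w x" if "p + q \<le> m" for p q
    using f_bound[OF x that] \<open>0 < w x\<close> by (simp add: pos_le_divide_eq)
  from small[OF x] show "norm (pd i j (\<lambda>x. a x * f x) x) * v x \<le> 2 ^ m * R * W * \<eta>"
  proof
    assume "v x \<le> \<eta> * w x"
    have "norm (pd i j (\<lambda>x. a x * f x) x) \<le> 2 ^ m * R * (W / w x)"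
      using assms(1,3,4) \<open>x \<in> U\<close> ij a_bound[OF x] f_le by (rule norm_pd_mult_le)
    then have "norm (pd i j (\<lambda>x. a x * f x) x) * v x \<le> 2 ^ m * R * (W / w x) * (\<eta> * w x)"
      using \<open>v x \<le> \<eta> * w x\<close> \<open>0 \<le> v x\<close> \<open>0 \<le> R\<close> \<open>0 \<le> W\<close> \<open>0 < w x\<close>
      by (intro mult_mono) auto
    also have "\<dots> = 2 ^ m * R * W * \<eta>" using \<open>0 < w x\<close> by simp
    finally show ?thesis .
  next
    assume "\<forall>p q. p + q \<le> m \<longrightarrow> pd p q a x = 0"
    then have "norm (pd i j (\<lambda>x. a x * f x) x) \<le> 2 ^ m * 0 * (W / w x)"
      using assms(1,3,4) \<open>x \<in> U\<close> ij f_le by (intro norm_pd_mult_le) auto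
    then show ?thesis using \<open>0 \<le> R\<close> \<open>0 \<le> W\<close> \<open>0 \<le> \<eta>\<close> by simp
  qed
qed

lemma grid_cutoff_mult_in_Dtest:
  assumes "open U" "A \<subseteq> U" "\<delta> > 0" "\<forall>x\<in>A. \<forall>y\<in>frontier U. \<delta> \<le> dist x y"
    and "compact K" "K \<subseteq> closure A" "smooth_on_set U f"
  shows "(\<lambda>x. grid_cutoff (16 / \<delta>) K x * f x) \<in> Dtest U"
proof (rule mult_in_Dtest[OF assms(1) smooth_on_set_grid_cutoff assms(7)])
  have "16 / \<delta> > 0" "8 / (16 / \<delta>) = \<delta> / 2" using assms(3) by simp_all
  then have "closure {x. grid_cutoff (16 / \<delta>) K x \<noteq> 0} \<subseteq> (\<Union>k\<in>K. cball k (\<delta> / 2))"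
    using grid_cutoff_support(1)[OF _ assms(5)] by metis
  also have "\<dots> \<subseteq> U"
    using assms(2-4,6) by (intro UN_least cball_subset_if_frontier_dist) auto
  finally show "closure {x. grid_cutoff (16 / \<delta>) K x \<noteq> 0} \<subseteq> U" .
  show "compact (closure {x. grid_cutoff (16 / \<delta>) K x \<noteq> 0})"
    using grid_cutoff_support(2) assms(3,5) by simp
qed

lemma weighted_cutoff_approximation:
  fixes A U :: "(real \<times> real) set" and v w :: "real \<times> real \<Rightarrow> real"
  assumes "open U" "A \<subseteq> U" "\<delta> > 0" "\<forall>x\<in>A. \<forall>y\<in>frontier U. \<delta> \<le> dist x y"
    and f: "f \<in> Enu w U"
    and w_pos: "\<And>x. x \<in> A \<Longrightarrow> 0 < w x" and v_nonneg: "\<And>x. x \<in> A \<Longrightarrow> 0 \<le> v x"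
    and "\<epsilon> > 0"
  shows "\<exists>\<eta>>0. \<forall>K. compact K \<and> K \<subseteq> closure A \<and> (\<forall>x\<in>A - K. v x \<le> \<eta> * w x) \<longrightarrow>
           (\<exists>\<phi>\<in>Dtest U. wsemi v A m (\<lambda>x. \<phi> x - f x) < ereal \<epsilon>)"
proof -
  define c where "c = 16 / \<delta>"
  have "c > 0" using assms(3) by (simp add: c_def)
  obtain R where "R \<ge> 0" and R: "\<And>K x i j. bounded K \<Longrightarrow> i + j \<le> m \<Longrightarrow>
      norm (pd i j (\<lambda>y. grid_cutoff c K y - 1) x) \<le> R"
    using grid_cutoff_minus_1_pd_bounded[OF \<open>c > 0\<close>] by blast
  have smooth_f: "smooth_on_set U f" using f by (simp add: Enu_def)
  obtain W where "W \<ge> 0" and W: "\<And>x i j. x \<in> U \<Longrightarrow> i + j \<le> m \<Longrightarrow> norm (pd i j f x) * w x \<le> W"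
    using wsemi_finite_imp_bound[of w U m f] f by (auto simp: Enu_def)
  define C where "C = 2 ^ m * R * W"
  have "C \<ge> 0" using \<open>R \<ge> 0\<close> \<open>W \<ge> 0\<close> by (simp add: C_def)
  define \<eta> where "\<eta> = \<epsilon> / (2 * (C + 1))"
  have "\<eta> > 0" using \<open>\<epsilon> > 0\<close> \<open>C \<ge> 0\<close> unfolding \<eta>_def by (intro divide_pos_pos) auto
  have "C * \<eta> < \<epsilon>"
    using \<open>\<epsilon> > 0\<close> \<open>C \<ge> 0\<close> by (simp add: \<eta>_def field_simps, intro add_nonneg_pos) auto
  have "\<exists>\<phi>\<in>Dtest U. wsemi v A m (\<lambda>x. \<phi> x - f x) < ereal \<epsilon>"
    if K: "compact K" "K \<subseteq> closure A" and small: "\<forall>x\<in>A - K. v x \<le> \<eta> * w x" for K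
  proof
    show "(\<lambda>x. grid_cutoff c K x * f x) \<in> Dtest U"
      unfolding c_def using assms(1-4) K smooth_f by (rule grid_cutoff_mult_in_Dtest)
    have "bounded K" using K(1) by (rule compact_imp_bounded)
    have "wsemi v A m (\<lambda>x. (grid_cutoff c K x - 1) * f x) \<le> ereal (2 ^ m * R * W * \<eta>)"
    proof (rule wsemi_mult_le[OF assms(1,2) smooth_on_set_diff_const[OF smooth_on_set_grid_cutoff]
          smooth_f less_imp_le[OF \<open>\<eta> > 0\<close>] w_pos v_nonneg])
      show "norm (pd p q (\<lambda>y. grid_cutoff c K y - 1) x) \<le> R" if "p + q \<le> m" for x p q
        using R[OF \<open>bounded K\<close> that] .
      show "norm (pd p q f x) * w x \<le> W" if "x \<in> A" "p + q \<le> m" for x p q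
        using W that assms(2) by blast
      show "v x \<le> \<eta> * w x \<or> (\<forall>p q. p + q \<le> m \<longrightarrow> pd p q (\<lambda>y. grid_cutoff c K y - 1) x = 0)"
        if "x \<in> A" for x
        using small that pd_grid_cutoff_minus_1_eq_0[OF \<open>c > 0\<close> \<open>bounded K\<close>] by blast
    qed
    also have "\<dots> < ereal \<epsilon>" using \<open>C * \<eta> < \<epsilon>\<close> by (simp add: C_def)
    finally show "wsemi v A m (\<lambda>x. grid_cutoff c K x * f x - f x) < ereal \<epsilon>"
      by (simp add: algebra_simps)
  qed
  with \<open>\<eta> > 0\<close> show ?thesis by blast
qed

theorem lemma4p4:
  fixes \<Omega> :: "(real \<times> real) set"
    and \<Omega>n :: "nat \<Rightarrow> (real \<times> real) set"
    and \<nu> :: "nat \<Rightarrow> real \<times> real \<Rightarrow> real"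
    and I1 :: "nat \<Rightarrow> nat"
    and n :: nat
  assumes "open \<Omega>"
    and "\<And>k. open (\<Omega>n k)"
    and "\<And>k. \<Omega>n k \<noteq> {}"
    and "\<And>k. \<Omega>n k \<noteq> UNIV"
    and "\<And>k. \<Omega>n k \<subseteq> \<Omega>n (Suc k)"
    and "\<Omega> = (\<Union>k. \<Omega>n k)"
    and "\<And>j k. j < k \<Longrightarrow> \<exists>\<delta>>0. \<forall>x\<in>\<Omega>n j. \<forall>y\<in>frontier (\<Omega>n k). \<delta> \<le> dist x y"
    and "\<And>k. continuous_on \<Omega> (\<nu> k)"
    and "\<And>k x. x \<in> \<Omega> \<Longrightarrow> 0 < \<nu> k x"
    and "\<And>k x. x \<in> \<Omega> \<Longrightarrow> \<nu> k x \<le> \<nu> (Suc k) x"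
    and "\<And>k. I1 k > k"
    and "\<And>k \<epsilon>. \<epsilon> > 0 \<Longrightarrow> \<exists>K. compact K \<and> K \<subseteq> closure (\<Omega>n k) \<and>
            (\<forall>x \<in> \<Omega>n k - K. \<nu> k x \<le> \<epsilon> * \<nu> (I1 k) x)"
  shows "\<forall>f \<in> Enu (\<nu> (I1 n)) (\<Omega>n (I1 n)). \<forall>m. \<forall>\<epsilon>>0.
           \<exists>\<phi> \<in> Dtest (\<Omega>n (I1 n)). wsemi (\<nu> n) (\<Omega>n n) m (\<lambda>x. \<phi> x - f x) < ereal \<epsilon>"
proof (intro ballI allI impI)
  fix f m and \<epsilon> :: real
  assume f: "f \<in> Enu (\<nu> (I1 n)) (\<Omega>n (I1 n))" and "\<epsilon> > 0"
  have "n < I1 n" using assms(11) .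
  then have "\<Omega>n n \<subseteq> \<Omega>n (I1 n)" using lift_Suc_mono_le[of \<Omega>n, OF assms(5)] by simp
  obtain \<delta> where "\<delta> > 0" and frontier_dist: "\<forall>x\<in>\<Omega>n n. \<forall>y\<in>frontier (\<Omega>n (I1 n)). \<delta> \<le> dist x y"
    using assms(7)[OF \<open>n < I1 n\<close>] by blast
  have \<nu>_pos: "0 < \<nu> k x" if "x \<in> \<Omega>n n" for k x
    using assms(6,9) that by blast
  then have \<nu>_nonneg: "0 \<le> \<nu> n x" if "x \<in> \<Omega>n n" for x
    using that less_imp_le by blast
  from weighted_cutoff_approximation[where v = "\<nu> n" and m = m, OF assms(2) \<open>\<Omega>n n \<subseteq> \<Omega>n (I1 n)\<close> \<open>\<delta> > 0\<close>
      frontier_dist f \<nu>_pos \<nu>_nonneg \<open>\<epsilon> > 0\<close>]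
  obtain \<eta> where "\<eta> > 0" and approximation:
    "\<forall>K. compact K \<and> K \<subseteq> closure (\<Omega>n n) \<and> (\<forall>x\<in>\<Omega>n n - K. \<nu> n x \<le> \<eta> * \<nu> (I1 n) x) \<longrightarrow>
       (\<exists>\<phi>\<in>Dtest (\<Omega>n (I1 n)). wsemi (\<nu> n) (\<Omega>n n) m (\<lambda>x. \<phi> x - f x) < ereal \<epsilon>)"
    by blast
  obtain K where "compact K" "K \<subseteq> closure (\<Omega>n n)" "\<forall>x\<in>\<Omega>n n - K. \<nu> n x \<le> \<eta> * \<nu> (I1 n) x"
    using assms(12)[OF \<open>\<eta> > 0\<close>] by blast
  with approximation show "\<exists>\<phi>\<in>Dtest (\<Omega>n (I1 n)). wsemi (\<nu> n) (\<Omega>n n) m (\<lambda>x. \<phi> x - f x) < ereal \<epsilon>"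
    by blast
qed

end
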